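(* Let $P$ be a poset on $[n]$ whose labeling is natural (the identity permutation $e$ is a linear extension), and let $x_1,\dots,x_n$ be strictly positive reals. Let $M$ be the transition matrix of the transposition graph of $P$. Define, for $\pi\in\mathcal{L}(P)$, $$w(\pi)=\prod_{i=1}^n x_{\pi_i}^{\,i-\pi_i}.$$ Then $w$ is the stationary state of the transposition graph Markov chain normalized by $w(e)=1$, i.e. $\sum_{\pi\in\mathcal{L}(P)}M(\pi',\pi)\,w(\pi)=0$ for every $\pi'\in\mathcal{L}(P)$.
   Context: Linear extensions: $\mathcal{L}(P)=\{\pi\in S_n : i\prec j \text{ in } P \Rightarrow \pi^{-1}_i<\pi^{-1}_j\}$, written in one-line notation $\pi=\pi_1\cdots\pi_n$. For $1\le j<n$, $\pi\tau_j$ is obtained from $\pi$ by swapping $\pi_j$ and $\pi_{j+1}$ if they are incomparable in $P$, and $\pi\tau_j=\pi$ otherwise. Transposition graph: vertex set $\mathcal{L}(P)$, and for each $\pi$ and $j\in[n-1]$ a directed edge $\pi\to\pi\tau_j$ of weight $x_{\pi_j}$. Transition matrix $M$: for $\pi'\neq\pi$, $M(\pi',\pi)$ is the sum of weights of edges $\pi\to\pi'$; $M(\pi,\pi)$ is minus the sum of weights of edges $\pi\to\pi'$ with $\pi'\ne\pi$. *)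

theory Defs
  imports "HOL-Combinatorics.Combinatorics"
begin

definition poset_on :: "nat \<Rightarrow> (nat \<Rightarrow> nat \<Rightarrow> bool) \<Rightarrow> bool" where
  "poset_on n lt \<longleftrightarrow>
     (\<forall>a b. lt a b \<longrightarrow> a \<in> {1..n} \<and> b \<in> {1..n}) \<and>
     (\<forall>a. \<not> lt a a) \<and>
     (\<forall>a b c. lt a b \<longrightarrow> lt b c \<longrightarrow> lt a c)"

text \<open>Linear extensions, as permutations of {1..n} in one-line notation (pi i = pi_i).\<close>
definition linext :: "nat \<Rightarrow> (nat \<Rightarrow> nat \<Rightarrow> bool) \<Rightarrow> (nat \<Rightarrow> nat) set" where
  "linext n lt = {\<pi>. \<pi> permutes {1..n} \<and>
      (\<forall>i\<in>{1..n}. \<forall>j\<in>{1..n}. lt i j \<longrightarrow> inv \<pi> i < inv \<pi> j)}"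

definition tau :: "(nat \<Rightarrow> nat \<Rightarrow> bool) \<Rightarrow> (nat \<Rightarrow> nat) \<Rightarrow> nat \<Rightarrow> (nat \<Rightarrow> nat)" where
  "tau lt \<pi> j = (if \<not> lt (\<pi> j) (\<pi> (Suc j)) \<and> \<not> lt (\<pi> (Suc j)) (\<pi> j)
                 then \<pi> \<circ> Transposition.transpose j (Suc j) else \<pi>)"

text \<open>Transition matrix M(pi', pi) of the transposition graph; the edge pi -> pi tau_j
  (j in [n-1]) has weight x (pi j).\<close>
definition transM :: "nat \<Rightarrow> (nat \<Rightarrow> nat \<Rightarrow> bool) \<Rightarrow> (nat \<Rightarrow> real) \<Rightarrow>
    (nat \<Rightarrow> nat) \<Rightarrow> (nat \<Rightarrow> nat) \<Rightarrow> real" where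
  "transM n lt x \<pi>' \<pi> =
     (if \<pi>' \<noteq> \<pi> then (\<Sum>j\<in>{j\<in>{1..<n}. tau lt \<pi> j = \<pi>'}. x (\<pi> j))
      else - (\<Sum>j\<in>{j\<in>{1..<n}. tau lt \<pi> j \<noteq> \<pi>}. x (\<pi> j)))"

definition wt :: "nat \<Rightarrow> (nat \<Rightarrow> real) \<Rightarrow> (nat \<Rightarrow> nat) \<Rightarrow> real" where
  "wt n x \<pi> = (\<Prod>i\<in>{1..n}. x (\<pi> i) powi (int i - int (\<pi> i)))"

end

theory Submission
  imports Defs
begin

text \<open>The weight w satisfies balance separately for each position j: the only linear
  extension that reaches \<open>\<pi>'\<close> by the move \<open>\<tau>\<^sub>j\<close> is \<open>\<rho> = \<pi>'\<tau>\<^sub>j\<close> itself, and swapping the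
  entries \<open>a = \<pi>'\<^sub>j\<close>, \<open>b = \<pi>'\<^sub>j\<^sub>+\<^sub>1\<close> changes w by the factor \<open>x\<^sub>b / x\<^sub>a\<close>, so the flow
  \<open>x\<^sub>b w(\<rho>)\<close> into \<open>\<pi>'\<close> along \<open>\<tau>\<^sub>j\<close> equals the flow \<open>x\<^sub>a w(\<pi>')\<close> out of \<open>\<pi>'\<close> along \<open>\<tau>\<^sub>j\<close>.
  Summing over j gives stationarity.\<close>

lemma tau_moved:
  assumes "tau lt \<pi> j \<noteq> \<pi>"
  shows "tau lt \<pi> j = \<pi> \<circ> Transposition.transpose j (Suc j)"
    and "\<not> lt (\<pi> j) (\<pi> (Suc j)) \<and> \<not> lt (\<pi> (Suc j)) (\<pi> j)"
  using assms unfolding tau_def by (auto split: if_splits)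

lemma tau_tau:
  assumes "tau lt \<pi> j \<noteq> \<pi>"
  shows "tau lt (tau lt \<pi> j) j = \<pi>"
  using tau_moved[OF assms] unfolding tau_def by (simp add: comp_assoc)

lemma tau_eq_iff:
  assumes "\<pi> \<noteq> \<pi>'"
  shows "tau lt \<pi> j = \<pi>' \<longleftrightarrow> tau lt \<pi>' j \<noteq> \<pi>' \<and> \<pi> = tau lt \<pi>' j"
  using assms tau_tau by metis

lemma finite_linext: "finite (linext n lt)"
  by (rule finite_subset[OF _ finite_permutations[of "{1..n}"]]) (auto simp: linext_def)

lemma tau_in_linext:
  assumes L: "\<pi> \<in> linext n lt" and j: "1 \<le> j" "j < n"
  shows "tau lt \<pi> j \<in> linext n lt"
proof (cases "tau lt \<pi> j = \<pi>")
  case False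
  let ?s = "Transposition.transpose j (Suc j)"
  have tau: "tau lt \<pi> j = \<pi> \<circ> ?s"
    and incomp: "\<not> lt (\<pi> j) (\<pi> (Suc j)) \<and> \<not> lt (\<pi> (Suc j)) (\<pi> j)"
    using tau_moved[OF False] by auto
  have p: "\<pi> permutes {1..n}"
    and ord: "\<forall>i\<in>{1..n}. \<forall>k\<in>{1..n}. lt i k \<longrightarrow> inv \<pi> i < inv \<pi> k"
    using L unfolding linext_def by auto
  have "?s permutes {1..n}" using j by (intro permutes_swap_id) auto
  then have perm: "\<pi> \<circ> ?s permutes {1..n}" using p by (rule permutes_compose)
  have inv: "inv (\<pi> \<circ> ?s) = ?s \<circ> inv \<pi>"
    using o_inv_distrib[OF permutes_bij[OF p] bij_transpose] by simp
  have "inv (\<pi> \<circ> ?s) i < inv (\<pi> \<circ> ?s) k"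
    if i: "i \<in> {1..n}" and k: "k \<in> {1..n}" and l: "lt i k" for i k
  proof -
    have "inv \<pi> i < inv \<pi> k" using ord i k l by auto
    moreover have "\<not> (inv \<pi> i = j \<and> inv \<pi> k = Suc j)"
      using incomp l permutes_inverses(1)[OF p] by metis
    ultimately show ?thesis unfolding inv by (auto simp: transpose_def)
  qed
  then show ?thesis unfolding linext_def tau using perm by auto
qed (use L in simp)

lemma wt_transpose:
  assumes j: "1 \<le> j" "j < n" and nz: "x (\<pi> j) \<noteq> 0" "x (\<pi> (Suc j)) \<noteq> 0"
  shows "x (\<pi> (Suc j)) * wt n x (\<pi> \<circ> Transposition.transpose j (Suc j))
    = x (\<pi> j) * wt n x \<pi>"
proof -
  let ?s = "Transposition.transpose j (Suc j)"
  define a where "a = \<pi> j"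
  define b where "b = \<pi> (Suc j)"
  define R where "R = (\<Prod>i\<in>{1..n} - {j, Suc j}. x (\<pi> i) powi (int i - int (\<pi> i)))"
  have sub: "{j, Suc j} \<subseteq> {1..n}" using j by auto
  have "wt n x \<pi> = (\<Prod>i\<in>{j, Suc j}. x (\<pi> i) powi (int i - int (\<pi> i))) * R"
    unfolding wt_def R_def by (subst prod.subset_diff[OF sub]) (auto simp: mult.commute)
  then have wt: "wt n x \<pi> = x a powi (int j - int a) * x b powi (int (Suc j) - int b) * R"
    by (simp only: a_def b_def) simp
  have "wt n x (\<pi> \<circ> ?s)
      = (\<Prod>i\<in>{j, Suc j}. x ((\<pi> \<circ> ?s) i) powi (int i - int ((\<pi> \<circ> ?s) i))) * R"
    unfolding wt_def R_def
    by (subst prod.subset_diff[OF sub]) (auto simp: mult.commute intro!: prod.cong)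
  then have wt_s: "wt n x (\<pi> \<circ> ?s) = x b powi (int j - int b) * x a powi (int (Suc j) - int a) * R"
    by (simp only: a_def b_def) simp
  have "x c powi (int (Suc j) - int c) = x c powi (int j - int c) * x c" if "x c \<noteq> 0" for c
    using power_int_add_1[of "x c" "int j - int c"] that by (simp add: algebra_simps)
  then show ?thesis
    using nz unfolding a_def[symmetric] b_def[symmetric] wt wt_s by (simp add: algebra_simps)
qed

lemma inflow_along_tau:
  assumes L: "\<pi>' \<in> linext n lt" and j: "1 \<le> j" "j < n"
    and nz: "\<And>i. i \<in> {1..n} \<Longrightarrow> x i \<noteq> 0"
  shows "(\<Sum>\<pi>\<in>linext n lt - {\<pi>'}. if tau lt \<pi> j = \<pi>' then x (\<pi> j) * wt n x \<pi> else 0)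
    = (if tau lt \<pi>' j \<noteq> \<pi>' then x (\<pi>' j) * wt n x \<pi>' else 0)"
proof -
  let ?\<rho> = "tau lt \<pi>' j"
  have "(\<Sum>\<pi>\<in>linext n lt - {\<pi>'}. if tau lt \<pi> j = \<pi>' then x (\<pi> j) * wt n x \<pi> else 0)
      = (\<Sum>\<pi>\<in>linext n lt - {\<pi>'}. if ?\<rho> \<noteq> \<pi>' \<and> \<pi> = ?\<rho> then x (\<pi> j) * wt n x \<pi> else 0)"
    by (intro sum.cong refl) (simp add: tau_eq_iff)
  also have "\<dots> = (if ?\<rho> \<noteq> \<pi>' then x (?\<rho> j) * wt n x ?\<rho> else 0)"
    using tau_in_linext[OF L j] finite_linext by (simp add: sum.delta' if_distrib)
  also have "\<dots> = (if ?\<rho> \<noteq> \<pi>' then x (\<pi>' j) * wt n x \<pi>' else 0)"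
  proof (cases "?\<rho> = \<pi>'")
    case False
    have "\<pi>' permutes {1..n}" using L unfolding linext_def by auto
    then have "\<pi>' j \<in> {1..n}" "\<pi>' (Suc j) \<in> {1..n}"
      using permutes_in_image[of \<pi>' "{1..n}"] j by auto
    then have "x (\<pi>' j) \<noteq> 0" "x (\<pi>' (Suc j)) \<noteq> 0" using nz by auto
    then show ?thesis
      using wt_transpose[OF j] tau_moved[OF False] by (simp add: transpose_def)
  qed simp
  finally show ?thesis .
qed

lemma transM_offdiag:
  assumes "\<pi> \<noteq> \<pi>'"
  shows "transM n lt x \<pi>' \<pi> * wt n x \<pi>
    = (\<Sum>j\<in>{1..<n}. if tau lt \<pi> j = \<pi>' then x (\<pi> j) * wt n x \<pi> else 0)"
  using assms unfolding transM_def
  by (simp add: sum.inter_filter[symmetric] sum_distrib_right eq_commute[of \<pi>'])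

lemma wt_stationary:
  assumes L: "\<pi>' \<in> linext n lt" and nz: "\<And>i. i \<in> {1..n} \<Longrightarrow> x i \<noteq> 0"
  shows "(\<Sum>\<pi>\<in>linext n lt. transM n lt x \<pi>' \<pi> * wt n x \<pi>) = 0"
proof -
  let ?L = "linext n lt" and ?J = "{1..<n}"
  have "(\<Sum>\<pi>\<in>?L. transM n lt x \<pi>' \<pi> * wt n x \<pi>)
      = transM n lt x \<pi>' \<pi>' * wt n x \<pi>' + (\<Sum>\<pi>\<in>?L - {\<pi>'}. transM n lt x \<pi>' \<pi> * wt n x \<pi>)"
    using finite_linext L by (simp add: sum.remove)
  also have "(\<Sum>\<pi>\<in>?L - {\<pi>'}. transM n lt x \<pi>' \<pi> * wt n x \<pi>)
      = (\<Sum>j\<in>?J. \<Sum>\<pi>\<in>?L - {\<pi>'}. if tau lt \<pi> j = \<pi>' then x (\<pi> j) * wt n x \<pi> else 0)"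
    by (simp add: transM_offdiag) (rule sum.swap)
  also have "\<dots> = (\<Sum>j\<in>?J. if tau lt \<pi>' j \<noteq> \<pi>' then x (\<pi>' j) * wt n x \<pi>' else 0)"
    using inflow_along_tau[where x = x, OF L _ _ nz] by (intro sum.cong) auto
  also have "\<dots> = (\<Sum>j\<in>{j\<in>?J. tau lt \<pi>' j \<noteq> \<pi>'}. x (\<pi>' j)) * wt n x \<pi>'"
    by (simp add: sum.inter_filter[symmetric] sum_distrib_right)
  finally show ?thesis unfolding transM_def by simp
qed

theorem theorem4p7:
  fixes n :: nat and lt :: "nat \<Rightarrow> nat \<Rightarrow> bool" and x :: "nat \<Rightarrow> real"
  assumes "poset_on n lt"
    and "id \<in> linext n lt"
    and "\<And>i. i \<in> {1..n} \<Longrightarrow> x i > 0"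
  shows "wt n x id = 1 \<and>
    (\<forall>\<pi>'\<in>linext n lt. (\<Sum>\<pi>\<in>linext n lt. transM n lt x \<pi>' \<pi> * wt n x \<pi>) = 0)"
proof
  show "wt n x id = 1" unfolding wt_def by simp
  show "\<forall>\<pi>'\<in>linext n lt. (\<Sum>\<pi>\<in>linext n lt. transM n lt x \<pi>' \<pi> * wt n x \<pi>) = 0"
    using wt_stationary assms(3) by (metis less_irrefl)
qed

end
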